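(* Let $\mathcal{A}$ be a triangular algebra over a field $F$ with $\operatorname{char}(F)\neq2$. Then $\operatorname{JCent}(\mathcal{A})=\operatorname{Cent}(\mathcal{A})$.
   Context: A triangular algebra is an algebra of the form $\mathcal{A}=\begin{pmatrix}B & M\\ 0 & C\end{pmatrix}$ (with formal matrix operations), where $B,C$ are unital algebras and $M$ is a $(B,C)$-bimodule that is faithful as a left $B$-module and as a right $C$-module. $x\circ y=xy+yx$. $\operatorname{JCent}(\mathcal{A})$: linear $f:\mathcal{A}\to\mathcal{A}$ with $f(x\circ y)=f(x)\circ y$ for all $x,y$. $\operatorname{Cent}(\mathcal{A})$: linear $f$ with $f(xy)=f(x)y=xf(y)$ for all $x,y$. *)

theory Defs
  imports Main
begin

text \<open>A triangular algebra over a field F is modelled on the carrier type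
  'b \<times> 'm \<times> 'c (triples (b,m,c) standing for the formal matrix [[b,m],[0,c]]).\<close>

locale triangular_algebra =
  fixes sB :: "'f::field \<Rightarrow> 'b::ring_1 \<Rightarrow> 'b"
    and sC :: "'f \<Rightarrow> 'c::ring_1 \<Rightarrow> 'c"
    and sM :: "'f \<Rightarrow> 'm::ab_group_add \<Rightarrow> 'm"
    and lB :: "'b \<Rightarrow> 'm \<Rightarrow> 'm"
    and rC :: "'m \<Rightarrow> 'c \<Rightarrow> 'm"
  assumes sB_add: "sB a (x + y) = sB a x + sB a y"
    and sB_add2: "sB (a + a') x = sB a x + sB a' x"
    and sB_mult: "sB (a * a') x = sB a (sB a' x)"
    and sB_one: "sB 1 x = x"
    and sB_alg: "sB a (x * y) = sB a x * y" "sB a (x * y) = x * sB a y"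
    and sC_add: "sC a (z + w) = sC a z + sC a w"
    and sC_add2: "sC (a + a') z = sC a z + sC a' z"
    and sC_mult: "sC (a * a') z = sC a (sC a' z)"
    and sC_one: "sC 1 z = z"
    and sC_alg: "sC a (z * w) = sC a z * w" "sC a (z * w) = z * sC a w"
    and sM_add: "sM a (m + n) = sM a m + sM a n"
    and sM_add2: "sM (a + a') m = sM a m + sM a' m"
    and sM_mult: "sM (a * a') m = sM a (sM a' m)"
    and sM_one: "sM 1 m = m"
    and lB_add: "lB x (m + n) = lB x m + lB x n"
    and lB_add2: "lB (x + y) m = lB x m + lB y m"
    and lB_mult: "lB (x * y) m = lB x (lB y m)"
    and lB_one: "lB 1 m = m"
    and lB_smult: "sM a (lB x m) = lB (sB a x) m" "sM a (lB x m) = lB x (sM a m)"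
    and rC_add: "rC (m + n) z = rC m z + rC n z"
    and rC_add2: "rC m (z + w) = rC m z + rC m w"
    and rC_mult: "rC m (z * w) = rC (rC m z) w"
    and rC_one: "rC m 1 = m"
    and rC_smult: "sM a (rC m z) = rC (sM a m) z" "sM a (rC m z) = rC m (sC a z)"
    and bimod: "lB x (rC m z) = rC (lB x m) z"
    and faithful_left: "(\<forall>m. lB x m = 0) \<Longrightarrow> x = 0"
    and faithful_right: "(\<forall>m. rC m z = 0) \<Longrightarrow> z = 0"

fun tri_add :: "'b::plus \<times> 'm::plus \<times> 'c::plus \<Rightarrow> 'b \<times> 'm \<times> 'c \<Rightarrow> 'b \<times> 'm \<times> 'c" where
  "tri_add (x, m, z) (y, n, w) = (x + y, m + n, z + w)"

fun tri_smult :: "('f \<Rightarrow> 'b \<Rightarrow> 'b) \<Rightarrow> ('f \<Rightarrow> 'c \<Rightarrow> 'c) \<Rightarrow> ('f \<Rightarrow> 'm \<Rightarrow> 'm)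
    \<Rightarrow> 'f \<Rightarrow> 'b \<times> 'm \<times> 'c \<Rightarrow> 'b \<times> 'm \<times> 'c" where
  "tri_smult sB sC sM a (x, m, z) = (sB a x, sM a m, sC a z)"

fun tri_mult :: "('b::times \<Rightarrow> 'm::plus \<Rightarrow> 'm) \<Rightarrow> ('m \<Rightarrow> 'c::times \<Rightarrow> 'm)
    \<Rightarrow> 'b \<times> 'm \<times> 'c \<Rightarrow> 'b \<times> 'm \<times> 'c \<Rightarrow> 'b \<times> 'm \<times> 'c" where
  "tri_mult lB rC (x, m, z) (y, n, w) = (x * y, lB x n + rC m w, z * w)"

definition tri_jordan where
  "tri_jordan lB rC p q = tri_add (tri_mult lB rC p q) (tri_mult lB rC q p)"

definition tri_linear where
  "tri_linear sB sC sM f \<longleftrightarrow>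
     (\<forall>p q. f (tri_add p q) = tri_add (f p) (f q)) \<and>
     (\<forall>a p. f (tri_smult sB sC sM a p) = tri_smult sB sC sM a (f p))"

definition JCent where
  "JCent sB sC sM lB rC = {f. tri_linear sB sC sM f \<and>
     (\<forall>p q. f (tri_jordan lB rC p q) = tri_jordan lB rC (f p) q)}"

definition Cent where
  "Cent sB sC sM lB rC = {f. tri_linear sB sC sM f \<and>
     (\<forall>p q. f (tri_mult lB rC p q) = tri_mult lB rC (f p) q \<and>
            f (tri_mult lB rC p q) = tri_mult lB rC p (f q))}"

end

theory Submission
  imports Defs
begin

text \<open>Since the unit (1,0,1) satisfies 1 \<circ> x = 2x, a Jordan centralizer f satisfies
  2 f(x) = f(1) \<circ> x, so with char F \<noteq> 2 it is determined by z = f(1).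
  Feeding the idempotent (1,0,0) and the bimodule part into the Jordan identity shows that
  z = (z1,0,z2) with z1 m = m z2 for all m \<in> M; faithfulness of M then makes z1
  and z2 central, so z is central and f(x) = z x, which is a centralizer by associativity.\<close>

lemma double_cancel_scalar:
  fixes s :: "'f::field \<Rightarrow> 'a::ab_group_add \<Rightarrow> 'a" and x y :: 'a
  assumes two: "(2::'f) \<noteq> 0"
    and add: "\<And>a x y. s a (x + y) = s a x + s a y"
    and add2: "\<And>a a' x. s (a + a') x = s a x + s a' x"
    and one: "\<And>x. s 1 x = x"
    and double: "x + x = y + y"
  shows "x = y"
proof -
  define h where "h = inverse (2::'f)"
  have hh: "h + h = 1"
    using two by (simp add: h_def flip: mult_2)
  have "x = s (h + h) x" by (simp only: hh one)
  also have "\<dots> = s h (x + x)" by (simp only: add add2)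
  also have "\<dots> = s (h + h) y" by (simp only: double add add2)
  also have "\<dots> = y" by (simp only: hh one)
  finally show ?thesis .
qed

context triangular_algebra
begin

lemma lB_zero [simp]: "lB x 0 = 0"
  using lB_add[of x 0 0] by simp

lemma lB_zero_left [simp]: "lB 0 m = 0"
  using lB_add2[of 0 0 m] by simp

lemma rC_zero [simp]: "rC 0 z = 0"
  using rC_add[of 0 0 z] by simp

lemma rC_zero_right [simp]: "rC m 0 = 0"
  using rC_add2[of m 0 0] by simp

lemma faithful_left_eq:
  assumes "\<And>m. lB x m = lB y m"
  shows "x = y"
proof -
  have "lB (x - y) m = 0" for m
    using lB_add2[of "x - y" y m] assms[of m] by simp
  then show ?thesis
    using faithful_left[of "x - y"] by simp
qed

lemma faithful_right_eq:
  assumes "\<And>m. rC m z = rC m w"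
  shows "z = w"
proof -
  have "rC m (z - w) = 0" for m
    using rC_add2[of m "z - w" w] assms[of m] by simp
  then show ?thesis
    using faithful_right[of "z - w"] by simp
qed

lemma double_cancel_B: "(2::'f) \<noteq> 0 \<Longrightarrow> x + x = y + y \<Longrightarrow> x = (y::'b)"
  by (rule double_cancel_scalar[OF _ sB_add sB_add2 sB_one])

lemma double_cancel_M: "(2::'f) \<noteq> 0 \<Longrightarrow> x + x = y + y \<Longrightarrow> x = (y::'m)"
  by (rule double_cancel_scalar[OF _ sM_add sM_add2 sM_one])

lemma double_cancel_C: "(2::'f) \<noteq> 0 \<Longrightarrow> x + x = y + y \<Longrightarrow> x = (y::'c)"
  by (rule double_cancel_scalar[OF _ sC_add sC_add2 sC_one])

lemma tri_double_cancel:
  fixes p q :: "'b \<times> 'm \<times> 'c"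
  assumes two: "(2::'f) \<noteq> 0" and double: "tri_add p p = tri_add q q"
  shows "p = q"
proof -
  obtain b m c b' m' c' where pq: "p = (b, m, c)" "q = (b', m', c')"
    using prod_cases3 by metis
  have "b + b = b' + b'" "m + m = m' + m'" "c + c = c' + c'"
    using double by (simp_all add: pq)
  then show ?thesis
    using double_cancel_B[OF two, of b b'] double_cancel_M[OF two, of m m']
      double_cancel_C[OF two, of c c'] pq by simp
qed

lemma tri_linear_add: "tri_linear sB sC sM f \<Longrightarrow> f (tri_add p q) = tri_add (f p) (f q)"
  unfolding tri_linear_def by blast

lemma tri_mult_assoc:
  "tri_mult lB rC (tri_mult lB rC p q) r = tri_mult lB rC p (tri_mult lB rC q r)"
  by (cases p rule: prod_cases3, cases q rule: prod_cases3, cases r rule: prod_cases3)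
    (simp add: mult.assoc lB_add rC_add lB_mult rC_mult bimod)

lemma tri_mult_central_commute:
  assumes "\<And>b. z\<^sub>1 * b = b * z\<^sub>1" and "\<And>c. z\<^sub>2 * c = c * z\<^sub>2" and "\<And>m. rC m z\<^sub>2 = lB z\<^sub>1 m"
  shows "tri_mult lB rC (z\<^sub>1, 0, z\<^sub>2) p = tri_mult lB rC p (z\<^sub>1, 0, z\<^sub>2)"
  using assms by (cases p rule: prod_cases3) simp

lemma tri_jordan_one: "tri_jordan lB rC (1, 0, 1) p = tri_add p p"
  by (cases p rule: prod_cases3) (simp add: tri_jordan_def lB_one rC_one)

lemma Cent_subset_JCent: "Cent sB sC sM lB rC \<subseteq> JCent sB sC sM lB rC"
proof
  fix f
  assume "f \<in> Cent sB sC sM lB rC"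
  then have lin: "tri_linear sB sC sM f"
    and mult: "\<And>p q. f (tri_mult lB rC p q) = tri_mult lB rC (f p) q"
    and mult': "\<And>p q. f (tri_mult lB rC p q) = tri_mult lB rC p (f q)"
    unfolding Cent_def by blast+
  have "f (tri_jordan lB rC p q) = tri_jordan lB rC (f p) q" for p q
  proof -
    have "f (tri_jordan lB rC p q) = tri_add (f (tri_mult lB rC p q)) (f (tri_mult lB rC q p))"
      unfolding tri_jordan_def by (rule tri_linear_add[OF lin])
    also have "\<dots> = tri_jordan lB rC (f p) q"
      unfolding tri_jordan_def by (simp only: mult[of p q] mult'[of q p])
    finally show ?thesis .
  qed
  with lin show "f \<in> JCent sB sC sM lB rC"
    unfolding JCent_def by simp
qed

context
  fixes f :: "'b \<times> 'm \<times> 'c \<Rightarrow> 'b \<times> 'm \<times> 'c" and z\<^sub>1 z\<^sub>M z\<^sub>2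
  assumes two: "(2::'f) \<noteq> 0"
    and f_JCent: "f \<in> JCent sB sC sM lB rC"
    and f_one: "f (1, 0, 1) = (z\<^sub>1, z\<^sub>M, z\<^sub>2)"
begin

lemma JCent_linear: "tri_linear sB sC sM f"
  using f_JCent unfolding JCent_def by blast

lemmas JCent_add = tri_linear_add[OF JCent_linear]

lemma JCent_jordan: "f (tri_jordan lB rC p q) = tri_jordan lB rC (f p) q"
  using f_JCent unfolding JCent_def by blast

lemma JCent_double: "tri_add (f p) (f p) = tri_jordan lB rC (z\<^sub>1, z\<^sub>M, z\<^sub>2) p"
  using JCent_jordan[of "(1, 0, 1)" p] by (simp add: tri_jordan_one f_one JCent_add)

lemma JCent_image_idempotent: "z\<^sub>M = 0 \<and> f (1, 0, 0) = (z\<^sub>1, 0, 0)"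
proof -
  obtain a n d where fe: "f (1, 0, 0) = (a, n, d)"
    using prod_cases3 by metis
  have "tri_add (f (1, 0, 0)) (f (1, 0, 0)) = f (tri_jordan lB rC (1, 0, 0) (1, 0, 0))"
    unfolding tri_jordan_def by (simp add: lB_one flip: JCent_add)
  also have "\<dots> = tri_jordan lB rC (f (1, 0, 0)) (1, 0, 0)"
    by (rule JCent_jordan)
  finally have "n + n = n" and "d + d = 0 + 0"
    using fe by (simp_all add: tri_jordan_def lB_one)
  then have n: "n = 0" and d: "d = 0"
    using double_cancel_C[OF two, of d 0] by simp_all
  have "(a + a, 0, 0) = (z\<^sub>1 + z\<^sub>1, z\<^sub>M, 0)"
    using JCent_double[of "(1, 0, 0)"] fe n d by (simp add: tri_jordan_def lB_one)
  then show ?thesis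
    using fe n d double_cancel_B[OF two, of a z\<^sub>1] by simp
qed

lemma JCent_on_bimodule: "f (0, m, 0) = (0, lB z\<^sub>1 m, 0)"
  using JCent_jordan[of "(1, 0, 0)" "(0, m, 0)"] JCent_image_idempotent
  by (simp add: tri_jordan_def lB_one)

lemma JCent_unit_balanced: "rC m z\<^sub>2 = lB z\<^sub>1 m"
  using JCent_double[of "(0, m, 0)"] JCent_on_bimodule JCent_image_idempotent
  by (simp add: tri_jordan_def)

lemma JCent_unit_central_B: "z\<^sub>1 * b = b * z\<^sub>1"
proof -
  obtain a n d where fb: "f (b, 0, 0) = (a, n, d)"
    using prod_cases3 by metis
  have double: "a + a = z\<^sub>1 * b + b * z\<^sub>1" "n + n = 0 + 0" "d + d = 0 + 0"
    using JCent_double[of "(b, 0, 0)"] JCent_image_idempotent fb by (simp_all add: tri_jordan_def)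
  then have "n = 0" "d = 0"
    using double_cancel_M[OF two, of n 0] double_cancel_C[OF two, of d 0] by simp_all
  then have "lB a m = lB (z\<^sub>1 * b) m" for m
    using JCent_jordan[of "(b, 0, 0)" "(0, m, 0)"] JCent_on_bimodule fb
    by (simp add: tri_jordan_def lB_mult)
  then have "a = z\<^sub>1 * b"
    by (rule faithful_left_eq)
  then show ?thesis
    using double(1) by simp
qed

lemma JCent_unit_central_C: "z\<^sub>2 * c = c * z\<^sub>2"
proof -
  obtain a n d where fc: "f (0, 0, c) = (a, n, d)"
    using prod_cases3 by metis
  have double: "d + d = z\<^sub>2 * c + c * z\<^sub>2" "n + n = 0 + 0" "a + a = 0 + 0"
    using JCent_double[of "(0, 0, c)"] JCent_image_idempotent fc by (simp_all add: tri_jordan_def)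
  then have "n = 0" "a = 0"
    using double_cancel_M[OF two, of n 0] double_cancel_B[OF two, of a 0] by simp_all
  then have "rC m d = rC m (c * z\<^sub>2)" for m
    using JCent_jordan[of "(0, 0, c)" "(0, m, 0)"] JCent_on_bimodule fc
    by (simp add: tri_jordan_def rC_mult flip: JCent_unit_balanced)
  then have "d = c * z\<^sub>2"
    by (rule faithful_right_eq)
  then show ?thesis
    using double(1) by simp
qed

lemma JCent_eq_mult_unit_image: "f p = tri_mult lB rC (z\<^sub>1, 0, z\<^sub>2) p"
proof (rule tri_double_cancel[OF two])
  have "tri_jordan lB rC (z\<^sub>1, 0, z\<^sub>2) p
      = tri_add (tri_mult lB rC (z\<^sub>1, 0, z\<^sub>2) p) (tri_mult lB rC (z\<^sub>1, 0, z\<^sub>2) p)"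
    unfolding tri_jordan_def
    by (simp add: tri_mult_central_commute JCent_unit_central_B JCent_unit_central_C
        JCent_unit_balanced)
  then show "tri_add (f p) (f p)
      = tri_add (tri_mult lB rC (z\<^sub>1, 0, z\<^sub>2) p) (tri_mult lB rC (z\<^sub>1, 0, z\<^sub>2) p)"
    using JCent_double JCent_image_idempotent by simp
qed

lemma JCent_in_Cent: "f \<in> Cent sB sC sM lB rC"
proof -
  let ?z = "(z\<^sub>1, 0, z\<^sub>2)"
  have central: "tri_mult lB rC ?z p = tri_mult lB rC p ?z" for p
    by (rule tri_mult_central_commute)
      (simp_all add: JCent_unit_central_B JCent_unit_central_C JCent_unit_balanced)
  have "f (tri_mult lB rC p q) = tri_mult lB rC (f p) q" for p q
    by (simp add: JCent_eq_mult_unit_image tri_mult_assoc)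
  moreover have "f (tri_mult lB rC p q) = tri_mult lB rC p (f q)" for p q
  proof -
    have "f (tri_mult lB rC p q) = tri_mult lB rC (tri_mult lB rC ?z p) q"
      by (simp add: JCent_eq_mult_unit_image tri_mult_assoc)
    also have "\<dots> = tri_mult lB rC p (tri_mult lB rC ?z q)"
      by (simp only: central tri_mult_assoc)
    finally show ?thesis
      by (simp only: JCent_eq_mult_unit_image)
  qed
  moreover note JCent_linear
  ultimately show ?thesis
    unfolding Cent_def by blast
qed

end

end

theorem corollary3p8:
  fixes sB :: "'f::field \<Rightarrow> 'b::ring_1 \<Rightarrow> 'b"
    and sC :: "'f \<Rightarrow> 'c::ring_1 \<Rightarrow> 'c"
    and sM :: "'f \<Rightarrow> 'm::ab_group_add \<Rightarrow> 'm"
    and lB :: "'b \<Rightarrow> 'm \<Rightarrow> 'm"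
    and rC :: "'m \<Rightarrow> 'c \<Rightarrow> 'm"
  assumes "triangular_algebra sB sC sM lB rC"
    and "(2::'f) \<noteq> 0"
  shows "JCent sB sC sM lB rC = Cent sB sC sM lB rC"
proof
  show "JCent sB sC sM lB rC \<subseteq> Cent sB sC sM lB rC"
  proof
    fix f
    assume "f \<in> JCent sB sC sM lB rC"
    moreover obtain z\<^sub>1 z\<^sub>M z\<^sub>2 where "f (1, 0, 1) = (z\<^sub>1, z\<^sub>M, z\<^sub>2)"
      using prod_cases3 by metis
    ultimately show "f \<in> Cent sB sC sM lB rC"
      using triangular_algebra.JCent_in_Cent[OF assms] by blast
  qed
  show "Cent sB sC sM lB rC \<subseteq> JCent sB sC sM lB rC"
    using triangular_algebra.Cent_subset_JCent[OF assms(1)] .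
qed

end
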